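(* Under the hypotheses and notation of the context, for every $p\in(0,1)$ the family $\alpha(p;b,s,s')=\tilde\alpha(p;b,s,s')$ ($b\in\Lambda$, $s,s'\in S$) is the unique family of nonnegative real numbers $(a(b,s,s'))_{b\in\Lambda,\,s,s'\in S}$ satisfying $\sum_{s'\in S}a(b,s,s')=1$ for all $b,s$, and, for all $b,s,s'$, $$a(b,s,s')=\sum_{x\in\{0,1\}}\pi_x\,Q_x(b,s,s'),$$ where $\pi_1=p$, $\pi_0=1-p$, and, writing $\rho(s,x,b)=c_1\cdots c_r$ and $t=\sigma(s,x,b)$: if $r=0$ then $Q_x(b,s,s')=\mathbf 1\{t=s'\}$, and if $r>0$ then $Q_x(b,s,s')=\sum\prod_{i=1}^r a(c_i,t_i,t_{i+1})$, the sum running over all $(t_1,\dots,t_{r+1})\in S^{r+1}$ with $t_1=t$ and $t_{r+1}=s'$.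
   Context: A (deterministic) pushdown automaton over input alphabet $\{0,1\}$ consists of a finite state set $S$, a finite stack alphabet $\Lambda$, and a transition map assigning to each $(s,x,b)\in S\times\{0,1\}\times\Lambda$ a new state $\sigma(s,x,b)\in S$ and a word $\rho(s,x,b)\in\Lambda^*$. At each step it reads one input bit $x$ (input bits are i.i.d., equal to $1$ with probability $p$); in state $s$ with stack $bu$ ($b$ the top, i.e. leftmost, symbol) it moves to state $\sigma(s,x,b)$ with stack $\rho(s,x,b)u$; when the stack is empty it stops. Standing assumption: for every $b\in\Lambda$, $s\in S$, $w\in\Lambda^*$ and $p\in(0,1)$, started in state $s$ with stack $bw$, almost surely the stack content eventually equals $w$. For $u\in\Lambda^*$, $\tilde\alpha(p;u,s,s')$ denotes the probability that, started in state $s$ with stack $uw$, at the first time the stack content equals $w$ the automaton is in state $s'$ (independent of $w$). *)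

theory Defs
  imports "HOL-Probability.Probability"
begin

text \<open>Input bits are modelled as booleans: True = 1, False = 0.
  A (deterministic) pushdown automaton is given by
  trans_st :: "'s \<Rightarrow> bool \<Rightarrow> 'b \<Rightarrow> 's and rho :: 's \<Rightarrow> bool \<Rightarrow> 'b \<Rightarrow> 'b list.
  Configurations are pairs (state, stack), the head of the list being the top.\<close>

fun pda_step ::
  "('s \<Rightarrow> bool \<Rightarrow> 'b \<Rightarrow> 's) \<Rightarrow> ('s \<Rightarrow> bool \<Rightarrow> 'b \<Rightarrow> 'b list) \<Rightarrow> 's \<times> 'b list \<Rightarrow> bool \<Rightarrow> 's \<times> 'b list"
where
  "pda_step trans_st rho (s, []) x = (s, [])"
| "pda_step trans_st rho (s, b # u) x = (trans_st s x b, rho s x b @ u)"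

fun pda_run ::
  "('s \<Rightarrow> bool \<Rightarrow> 'b \<Rightarrow> 's) \<Rightarrow> ('s \<Rightarrow> bool \<Rightarrow> 'b \<Rightarrow> 'b list) \<Rightarrow> 's \<times> 'b list \<Rightarrow> bool stream \<Rightarrow> nat \<Rightarrow> 's \<times> 'b list"
where
  "pda_run trans_st rho c \<omega> 0 = c"
| "pda_run trans_st rho c \<omega> (Suc n) = pda_step trans_st rho (pda_run trans_st rho c \<omega> n) (\<omega> !! n)"

definition input_space :: "real \<Rightarrow> bool stream measure" where
  "input_space p = stream_space (measure_pmf (bernoulli_pmf p))"

text \<open>alpha-tilde(p; u, s, s'): probability that, started in state s with stack u
  (i.e. u w with w = [], the quantity being independent of w), at the first time the
  stack content equals w = [] the automaton is in state s'.\<close>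
definition alpha_tilde ::
  "('s \<Rightarrow> bool \<Rightarrow> 'b \<Rightarrow> 's) \<Rightarrow> ('s \<Rightarrow> bool \<Rightarrow> 'b \<Rightarrow> 'b list) \<Rightarrow> real \<Rightarrow> 'b list \<Rightarrow> 's \<Rightarrow> 's \<Rightarrow> real"
where
  "alpha_tilde trans_st rho p u s s' =
     measure (input_space p)
       {\<omega> \<in> space (input_space p). \<exists>n. snd (pda_run trans_st rho (s, u) \<omega> n) = []
            \<and> (\<forall>m<n. snd (pda_run trans_st rho (s, u) \<omega> m) \<noteq> [])
            \<and> fst (pda_run trans_st rho (s, u) \<omega> n) = s'}"

definition pda_standing_assumption ::
  "('s \<Rightarrow> bool \<Rightarrow> 'b \<Rightarrow> 's) \<Rightarrow> ('s \<Rightarrow> bool \<Rightarrow> 'b \<Rightarrow> 'b list) \<Rightarrow> bool"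
where
  "pda_standing_assumption trans_st rho \<longleftrightarrow>
     (\<forall>b s w p. 0 < p \<and> p < 1 \<longrightarrow>
        (AE \<omega> in input_space p. \<exists>n. snd (pda_run trans_st rho (s, b # w) \<omega> n) = w))"

text \<open>chain a cs t s' = sum over (t_1,...,t_{r+1}) in S^{r+1} with t_1 = t, t_{r+1} = s'
  of prod_{i=1}^r a(c_i, t_i, t_{i+1}), where cs = c_1...c_r; for r = 0 this is the
  indicator of t = s'.\<close>
fun chain :: "('b \<Rightarrow> 's::finite \<Rightarrow> 's \<Rightarrow> real) \<Rightarrow> 'b list \<Rightarrow> 's \<Rightarrow> 's \<Rightarrow> real" where
  "chain a [] t s' = (if t = s' then 1 else 0)"
| "chain a (c # cs) t s' = (\<Sum>t2\<in>UNIV. a c t t2 * chain a cs t2 s')"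

definition Qx ::
  "('s::finite \<Rightarrow> bool \<Rightarrow> 'b \<Rightarrow> 's) \<Rightarrow> ('s \<Rightarrow> bool \<Rightarrow> 'b \<Rightarrow> 'b list) \<Rightarrow> ('b \<Rightarrow> 's \<Rightarrow> 's \<Rightarrow> real)
     \<Rightarrow> bool \<Rightarrow> 'b \<Rightarrow> 's \<Rightarrow> 's \<Rightarrow> real"
where
  "Qx trans_st rho a x b s s' = chain a (rho s x b) (trans_st s x b) s'"

definition bit_prob :: "real \<Rightarrow> bool \<Rightarrow> real" where
  "bit_prob p x = (if x then p else 1 - p)"

definition solves_system ::
  "('s::finite \<Rightarrow> bool \<Rightarrow> 'b \<Rightarrow> 's) \<Rightarrow> ('s \<Rightarrow> bool \<Rightarrow> 'b \<Rightarrow> 'b list) \<Rightarrow> real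
     \<Rightarrow> ('b \<Rightarrow> 's \<Rightarrow> 's \<Rightarrow> real) \<Rightarrow> bool"
where
  "solves_system trans_st rho p a \<longleftrightarrow>
     (\<forall>b s s'. 0 \<le> a b s s') \<and>
     (\<forall>b s. (\<Sum>s'\<in>UNIV. a b s s') = 1) \<and>
     (\<forall>b s s'. a b s s' = (\<Sum>x\<in>UNIV. bit_prob p x * Qx trans_st rho a x b s s'))"

end

theory Submission
  imports Defs
begin

text \<open>Uniqueness: for a solution a and a target state s', the function
  h(t, u) = chain a u t s' on configurations is harmonic for the configuration chain, lies in [0, 1]
  and equals the indicator of t = s' on empty stacks.  Hence h(X_n) is a bounded martingale, and
  since the stack empties almost surely, h(s, [b]) = a(b, s, s') is the probability of emptying
  the stack in state s', i.e. alpha-tilde.  Existence: the system is a fixed point equation for a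
  continuous self-map of the compact convex set of stochastic families, so Brouwer's theorem gives a
  solution, which by uniqueness is alpha-tilde.\<close>

lemma pda_run_Suc_stl:
  "pda_run \<sigma> \<rho> c \<omega> (Suc n) = pda_run \<sigma> \<rho> (pda_step \<sigma> \<rho> c (shd \<omega>)) (stl \<omega>) n"
  by (induction n) auto

lemma pda_run_stays_empty:
  assumes "snd (pda_run \<sigma> \<rho> c \<omega> k) = []" and "k \<le> n"
  shows "pda_run \<sigma> \<rho> c \<omega> n = pda_run \<sigma> \<rho> c \<omega> k"
  using assms(2)
proof (induction n rule: dec_induct)
  case (step n)
  with assms(1) show ?case by (cases "pda_run \<sigma> \<rho> c \<omega> k") auto
qed simp

lemma measurable_pda_run:
  "(\<lambda>\<omega>. pda_run \<sigma> \<rho> c \<omega> n) \<in> stream_space (measure_pmf q) \<rightarrow>\<^sub>M count_space UNIV"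
proof (induction n arbitrary: c)
  case (Suc n)
  have "shd \<in> stream_space (measure_pmf q) \<rightarrow>\<^sub>M count_space UNIV"
    using measurable_shd[of "measure_pmf q"] by simp
  from measurable_compose_countable[OF measurable_compose[OF measurable_stl Suc] this]
  show ?case by (simp only: pda_run_Suc_stl)
qed simp

lemma prob_space_input_space: "prob_space (input_space p)"
  unfolding input_space_def
  by (rule prob_space.prob_space_stream_space[OF prob_space_measure_pmf])

lemma sets_input_space_pda_run:
  "{\<omega> \<in> space (input_space p). P (pda_run \<sigma> \<rho> c \<omega> n)} \<in> sets (input_space p)"
  unfolding input_space_def
  by (rule measurable_sets_Collect[OF measurable_pda_run]) simp

definition pda_harmonic ::
  "('s \<Rightarrow> bool \<Rightarrow> 'b \<Rightarrow> 's) \<Rightarrow> ('s \<Rightarrow> bool \<Rightarrow> 'b \<Rightarrow> 'b list) \<Rightarrow> real \<Rightarrow> ('s \<times> 'b list \<Rightarrow> real) \<Rightarrow> bool"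
where
  "pda_harmonic \<sigma> \<rho> p h \<longleftrightarrow>
     (\<forall>c. h c = p * h (pda_step \<sigma> \<rho> c True) + (1 - p) * h (pda_step \<sigma> \<rho> c False))"

lemma nn_integral_harmonic_pda_run:
  assumes "pda_harmonic \<sigma> \<rho> p h" and "0 \<le> p" "p \<le> 1" and "\<And>x. 0 \<le> h x"
  shows "(\<integral>\<^sup>+\<omega>. h (pda_run \<sigma> \<rho> c \<omega> n) \<partial>input_space p) = h c"
proof (induction n arbitrary: c)
  case 0
  then show ?case
    by (simp add: prob_space.emeasure_space_1[OF prob_space_input_space])
next
  case (Suc n)
  have "(\<integral>\<^sup>+\<omega>. h (pda_run \<sigma> \<rho> c \<omega> (Suc n)) \<partial>input_space p)
      = (\<integral>\<^sup>+x. (\<integral>\<^sup>+\<omega>. h (pda_run \<sigma> \<rho> c (x ## \<omega>) (Suc n)) \<partial>input_space p) \<partial>bernoulli_pmf p)"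
    unfolding input_space_def
    by (rule prob_space.nn_integral_stream_space[OF prob_space_measure_pmf],
        rule measurable_compose[OF measurable_pda_run], simp)
  also have "\<dots> = (\<integral>\<^sup>+x. h (pda_step \<sigma> \<rho> c x) \<partial>bernoulli_pmf p)"
    by (simp only: pda_run_Suc_stl stream.sel Suc)
  also have "\<dots> = p * h (pda_step \<sigma> \<rho> c True) + (1 - p) * h (pda_step \<sigma> \<rho> c False)"
    using assms(2-4)
    by (simp add: nn_integral_measure_pmf nn_integral_count_space_finite UNIV_bool
        ennreal_mult'[symmetric] ennreal_plus[symmetric] mult.commute add.commute del: ennreal_plus)
  also have "\<dots> = h c"
    using assms(1) unfolding pda_harmonic_def by metis
  finally show ?case .
qed

lemma chain_nonneg: "(\<And>b s s'. 0 \<le> a b s s') \<Longrightarrow> 0 \<le> chain a cs t s'"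
  by (induction cs arbitrary: t) (auto intro!: sum_nonneg)

lemma sum_chain_eq_1:
  assumes "\<And>b s. (\<Sum>s'\<in>UNIV. a b s s') = 1"
  shows "(\<Sum>s'\<in>UNIV. chain a cs t s') = 1"
proof (induction cs arbitrary: t)
  case (Cons c cs)
  have "(\<Sum>s'\<in>UNIV. chain a (c # cs) t s') = (\<Sum>t'\<in>UNIV. \<Sum>s'\<in>UNIV. a c t t' * chain a cs t' s')"
    by (simp only: chain.simps sum_distrib_right) (rule sum.swap)
  also have "\<dots> = (\<Sum>t'\<in>UNIV. a c t t' * (\<Sum>s'\<in>UNIV. chain a cs t' s'))"
    by (simp add: sum_distrib_left)
  finally show ?case using Cons assms by simp
qed simp

lemma chain_le_1:
  assumes "\<And>b s s'. 0 \<le> a b s s'" and "\<And>b s. (\<Sum>s'\<in>UNIV. a b s s') = 1"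
  shows "chain a cs t s' \<le> 1"
proof -
  have "chain a cs t s' \<le> (\<Sum>s''\<in>UNIV. chain a cs t s'')"
    by (rule member_le_sum) (simp_all add: chain_nonneg assms(1))
  with sum_chain_eq_1[of a, OF assms(2)] show ?thesis by simp
qed

lemma chain_singleton: "chain a [b] t s' = a b t s'"
  by (simp add: if_distrib cong: if_cong)

lemma chain_append: "chain a (u @ w) t s' = (\<Sum>m\<in>UNIV. chain a u t m * chain a w m s')"
proof (induction u arbitrary: t)
  case (Cons c u)
  have "chain a ((c # u) @ w) t s'
      = (\<Sum>t'\<in>UNIV. \<Sum>m\<in>UNIV. a c t t' * (chain a u t' m * chain a w m s'))"
    by (simp add: Cons sum_distrib_left)
  also have "\<dots> = (\<Sum>m\<in>UNIV. chain a (c # u) t m * chain a w m s')"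
    by (subst sum.swap) (simp add: sum_distrib_right mult.assoc)
  finally show ?case .
qed (simp add: if_distrib[where f = "\<lambda>x. x * _"] cong: if_cong)

lemma pda_harmonic_chain:
  fixes \<sigma> :: "'s::finite \<Rightarrow> bool \<Rightarrow> 'b \<Rightarrow> 's"
  assumes "solves_system \<sigma> \<rho> p a"
  shows "pda_harmonic \<sigma> \<rho> p (\<lambda>(t, u). chain a u t s')"
  unfolding pda_harmonic_def
proof
  fix c :: "'s \<times> 'b list"
  obtain t u where c: "c = (t, u)" by fastforce
  have a_eq: "a b t t' = p * chain a (\<rho> t True b) (\<sigma> t True b) t'
      + (1 - p) * chain a (\<rho> t False b) (\<sigma> t False b) t'" for b t'
    using assms unfolding solves_system_def Qx_def bit_prob_def by (simp add: UNIV_bool add.commute)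
  show "(case c of (t, u) \<Rightarrow> chain a u t s')
      = p * (case pda_step \<sigma> \<rho> c True of (t, u) \<Rightarrow> chain a u t s')
        + (1 - p) * (case pda_step \<sigma> \<rho> c False of (t, u) \<Rightarrow> chain a u t s')"
  proof (cases u)
    case Nil
    then show ?thesis by (simp add: c algebra_simps)
  next
    case (Cons b w)
    have "chain a (b # w) t s' = (\<Sum>t'\<in>UNIV. a b t t' * chain a w t' s')"
      by simp
    also have "\<dots> = (\<Sum>t'\<in>UNIV. p * (chain a (\<rho> t True b) (\<sigma> t True b) t' * chain a w t' s')
        + (1 - p) * (chain a (\<rho> t False b) (\<sigma> t False b) t' * chain a w t' s'))"
      by (rule sum.cong) (simp_all add: a_eq algebra_simps)
    also have "\<dots> = p * chain a (\<rho> t True b @ w) (\<sigma> t True b) s'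
        + (1 - p) * chain a (\<rho> t False b @ w) (\<sigma> t False b) s'"
      by (simp add: chain_append sum.distrib sum_distrib_left)
    finally show ?thesis
      by (simp add: c Cons)
  qed
qed

lemma alpha_tilde_eq_measure_absorbed:
  "alpha_tilde \<sigma> \<rho> p u s s' = measure (input_space p)
     (\<Union>n. {\<omega> \<in> space (input_space p). pda_run \<sigma> \<rho> (s, u) \<omega> n = (s', [])})"
proof -
  let ?X = "pda_run \<sigma> \<rho> (s, u)"
  have "(\<exists>n. snd (?X \<omega> n) = [] \<and> (\<forall>m<n. snd (?X \<omega> m) \<noteq> []) \<and> fst (?X \<omega> n) = s')
    \<longleftrightarrow> (\<exists>n. ?X \<omega> n = (s', []))" for \<omega>
  proof
    assume "\<exists>n. ?X \<omega> n = (s', [])"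
    then obtain n where n: "?X \<omega> n = (s', [])" ..
    define k where "k = (LEAST k. snd (?X \<omega> k) = [])"
    have "snd (?X \<omega> k) = []" and "k \<le> n"
      unfolding k_def using n by (auto intro: LeastI[of _ n] Least_le)
    then have "?X \<omega> k = (s', [])"
      using n pda_run_stays_empty by metis
    moreover have "\<forall>m<k. snd (?X \<omega> m) \<noteq> []"
      unfolding k_def using not_less_Least by blast
    ultimately show "\<exists>n. snd (?X \<omega> n) = [] \<and> (\<forall>m<n. snd (?X \<omega> m) \<noteq> []) \<and> fst (?X \<omega> n) = s'"
      by (intro exI[of _ k]) simp
  qed (metis prod.collapse)
  then have "{\<omega> \<in> space (input_space p). \<exists>n. snd (?X \<omega> n) = [] \<and> (\<forall>m<n. snd (?X \<omega> m) \<noteq> [])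
      \<and> fst (?X \<omega> n) = s'} = (\<Union>n. {\<omega> \<in> space (input_space p). ?X \<omega> n = (s', [])})"
    by blast
  then show ?thesis
    unfolding alpha_tilde_def by simp
qed

lemma harmonic_bounds_absorption_prob:
  fixes h :: "'s \<times> 'b list \<Rightarrow> real" and c :: "'s \<times> 'b list" and n :: nat
  assumes "pda_harmonic \<sigma> \<rho> p h" and "0 \<le> p" "p \<le> 1"
    and "\<And>x. 0 \<le> h x" "\<And>x. h x \<le> 1" and "\<And>t. h (t, []) = (if t = s' then 1 else 0)"
  defines "E \<equiv> {\<omega> \<in> space (input_space p). pda_run \<sigma> \<rho> c \<omega> n = (s', [])}"
    and "N \<equiv> {\<omega> \<in> space (input_space p). snd (pda_run \<sigma> \<rho> c \<omega> n) \<noteq> []}"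
  shows "measure (input_space p) E \<le> h c"
    and "h c \<le> measure (input_space p) E + measure (input_space p) N"
proof -
  interpret prob_space "input_space p" by (rule prob_space_input_space)
  have events: "E \<in> events" "N \<in> events"
    unfolding E_def N_def by (rule sets_input_space_pda_run)+
  have pointwise: "indicator E \<omega> \<le> ennreal (h (pda_run \<sigma> \<rho> c \<omega> n))"
    "ennreal (h (pda_run \<sigma> \<rho> c \<omega> n)) \<le> indicator E \<omega> + indicator N \<omega>"
    if "\<omega> \<in> space (input_space p)" for \<omega>
  proof -
    obtain t u where tu: "pda_run \<sigma> \<rho> c \<omega> n = (t, u)" by fastforce
    show "indicator E \<omega> \<le> ennreal (h (pda_run \<sigma> \<rho> c \<omega> n))"
      "ennreal (h (pda_run \<sigma> \<rho> c \<omega> n)) \<le> indicator E \<omega> + indicator N \<omega>"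
      using that assms(4-6) by (cases u; simp add: tu E_def N_def)+
  qed
  have integral: "(\<integral>\<^sup>+\<omega>. h (pda_run \<sigma> \<rho> c \<omega> n) \<partial>input_space p) = h c"
    using nn_integral_harmonic_pda_run assms(1-4) .
  have "emeasure (input_space p) E = (\<integral>\<^sup>+\<omega>. indicator E \<omega> \<partial>input_space p)"
    using events by simp
  also have "\<dots> \<le> h c"
    unfolding integral[symmetric] by (rule nn_integral_mono) (rule pointwise(1))
  finally show "measure (input_space p) E \<le> h c"
    using assms(4) by (simp add: emeasure_eq_measure)
  have "h c \<le> (\<integral>\<^sup>+\<omega>. indicator E \<omega> + indicator N \<omega> \<partial>input_space p)"
    unfolding integral[symmetric] by (rule nn_integral_mono) (rule pointwise(2))
  also have "\<dots> = emeasure (input_space p) E + emeasure (input_space p) N"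
    using events by (simp add: nn_integral_add)
  also have "\<dots> = ennreal (measure (input_space p) E + measure (input_space p) N)"
    by (simp add: emeasure_eq_measure)
  finally show "h c \<le> measure (input_space p) E + measure (input_space p) N"
    by (rule ennreal_le_iff[THEN iffD1, rotated]) simp
qed

lemma harmonic_eq_absorption_prob:
  fixes h :: "'s \<times> 'b list \<Rightarrow> real" and c :: "'s \<times> 'b list"
  assumes "pda_harmonic \<sigma> \<rho> p h" and "0 \<le> p" "p \<le> 1"
    and "\<And>x. 0 \<le> h x" "\<And>x. h x \<le> 1" and "\<And>t. h (t, []) = (if t = s' then 1 else 0)"
    and "AE \<omega> in input_space p. \<exists>n. snd (pda_run \<sigma> \<rho> c \<omega> n) = []"
  shows "h c = measure (input_space p)
    (\<Union>n. {\<omega> \<in> space (input_space p). pda_run \<sigma> \<rho> c \<omega> n = (s', [])})"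
proof -
  interpret prob_space "input_space p" by (rule prob_space_input_space)
  define E where "E n = {\<omega> \<in> space (input_space p). pda_run \<sigma> \<rho> c \<omega> n = (s', [])}" for n
  define N where "N n = {\<omega> \<in> space (input_space p). snd (pda_run \<sigma> \<rho> c \<omega> n) \<noteq> []}" for n
  have events: "E n \<in> events" "N n \<in> events" for n
    unfolding E_def N_def by (rule sets_input_space_pda_run)+
  have bounds: "prob (E n) \<le> h c" "h c \<le> prob (E n) + prob (N n)" for n
    unfolding E_def N_def by (rule harmonic_bounds_absorption_prob[OF assms(1-6)])+
  have stays: "pda_run \<sigma> \<rho> c \<omega> (Suc n) = pda_run \<sigma> \<rho> c \<omega> n"
    if "snd (pda_run \<sigma> \<rho> c \<omega> n) = []" for \<omega> n
    using pda_run_stays_empty[OF that, of "Suc n"] by simp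
  have "incseq E"
    by (rule incseq_SucI) (auto simp: E_def stays)
  with events have lim_E: "(\<lambda>n. prob (E n)) \<longlonglongrightarrow> prob (\<Union>n. E n)"
    by (intro finite_Lim_measure_incseq) auto
  have "decseq N"
    by (rule decseq_SucI) (auto simp: N_def stays simp del: pda_run.simps(2))
  with events have lim_N: "(\<lambda>n. prob (N n)) \<longlonglongrightarrow> prob (\<Inter>n. N n)"
    by (intro finite_Lim_measure_decseq) auto
  have "emeasure (input_space p) (\<Inter>n. N n) = 0"
    using assms(7) AE_iff_measurable[of "\<Inter>n. N n" _ "\<lambda>\<omega>. \<exists>n. snd (pda_run \<sigma> \<rho> c \<omega> n) = []"] events
    by (auto simp: N_def)
  with lim_N have "(\<lambda>n. prob (N n)) \<longlonglongrightarrow> 0"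
    by (simp add: emeasure_eq_measure)
  have "prob (\<Union>n. E n) \<le> h c"
    using bounds(1) by (intro LIMSEQ_le_const2[OF lim_E]) auto
  moreover have "h c \<le> prob (\<Union>n. E n)"
    using tendsto_add[OF lim_E \<open>(\<lambda>n. prob (N n)) \<longlonglongrightarrow> 0\<close>] bounds(2)
    by (intro LIMSEQ_le_const) auto
  ultimately show ?thesis
    unfolding E_def by simp
qed

lemma solves_system_imp_eq_alpha_tilde:
  fixes \<sigma> :: "'s::finite \<Rightarrow> bool \<Rightarrow> 'b \<Rightarrow> 's"
  assumes "pda_standing_assumption \<sigma> \<rho>" and "0 < p" "p < 1" and "solves_system \<sigma> \<rho> p a"
  shows "a = (\<lambda>b s s'. alpha_tilde \<sigma> \<rho> p [b] s s')"
proof (intro ext)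
  fix b s s'
  from assms(4) have nonneg: "\<And>b s s'. 0 \<le> a b s s'"
    and stochastic: "\<And>b s. (\<Sum>s'\<in>UNIV. a b s s') = 1"
    unfolding solves_system_def by blast+
  have "a b s s' = (\<lambda>(t, u). chain a u t s') (s, [b])"
    by (simp only: prod.case chain_singleton)
  also have "\<dots> = measure (input_space p)
      (\<Union>n. {\<omega> \<in> space (input_space p). pda_run \<sigma> \<rho> (s, [b]) \<omega> n = (s', [])})"
    using assms(1-3)
    by (intro harmonic_eq_absorption_prob[OF pda_harmonic_chain[OF assms(4)]])
      (auto simp: pda_standing_assumption_def chain_nonneg chain_le_1 nonneg stochastic)
  also have "\<dots> = alpha_tilde \<sigma> \<rho> p [b] s s'"
    by (rule alpha_tilde_eq_measure_absorbed[symmetric])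
  finally show "a b s s' = alpha_tilde \<sigma> \<rho> p [b] s s'" .
qed

text \<open>Families a(b, s, s') are encoded as vectors indexed by \<open>'b \<times> 's \<times> 's\<close>, so that
  Brouwer's fixed point theorem applies.\<close>

definition stochastic_vecs :: "(real ^ ('b::finite \<times> 's::finite \<times> 's)) set" where
  "stochastic_vecs = {v. (\<forall>i. 0 \<le> v $ i) \<and> (\<forall>b s. (\<Sum>s'\<in>UNIV. v $ (b, s, s')) = 1)}"

definition vec_family :: "real ^ ('b::finite \<times> 's::finite \<times> 's) \<Rightarrow> 'b \<Rightarrow> 's \<Rightarrow> 's \<Rightarrow> real" where
  "vec_family v b s s' = v $ (b, s, s')"

definition system_map ::
  "('s::finite \<Rightarrow> bool \<Rightarrow> 'b::finite \<Rightarrow> 's) \<Rightarrow> ('s \<Rightarrow> bool \<Rightarrow> 'b \<Rightarrow> 'b list) \<Rightarrow> real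
     \<Rightarrow> real ^ ('b \<times> 's \<times> 's) \<Rightarrow> real ^ ('b \<times> 's \<times> 's)"
where
  "system_map \<sigma> \<rho> p v =
     vec_lambda (\<lambda>(b, s, s'). \<Sum>x\<in>UNIV. bit_prob p x * Qx \<sigma> \<rho> (vec_family v) x b s s')"

lemma stochastic_vecs_eq_Int:
  "stochastic_vecs = {v. \<forall>i. 0 \<le> v $ i} \<inter> (\<Inter>b. \<Inter>s. (\<lambda>v. \<Sum>s'\<in>UNIV. v $ (b, s, s')) -` {1})"
  unfolding stochastic_vecs_def by auto

lemma stochastic_vecs_le_1: "v \<in> stochastic_vecs \<Longrightarrow> v $ i \<le> 1"
  unfolding stochastic_vecs_def
  using member_le_sum[of "snd (snd i)" UNIV "\<lambda>s'. v $ (fst i, fst (snd i), s')"]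
  by (cases i) auto

lemma compact_stochastic_vecs: "compact stochastic_vecs"
proof -
  have "stochastic_vecs \<subseteq> cbox 0 (\<chi> i. 1)"
    by (auto simp: mem_box_cart stochastic_vecs_def stochastic_vecs_le_1)
  moreover have "closed stochastic_vecs"
    unfolding stochastic_vecs_eq_Int
    by (intro closed_Int closed_positive_orthant closed_INT ballI closed_vimage closed_singleton)
      (intro continuous_intros)
  ultimately show ?thesis
    by (metis bounded_cbox bounded_subset compact_eq_bounded_closed)
qed

lemma convex_stochastic_vecs: "convex stochastic_vecs"
  unfolding stochastic_vecs_eq_Int
proof (intro convex_Int convex_INT ballI convex_linear_vimage convex_singleton linear_compose_sum)
  show "convex {v :: real ^ 'n. \<forall>i. 0 \<le> v $ i}"
    by (rule convex_box_cart) (simp add: atLeast_def[symmetric])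
qed (rule bounded_linear.linear[OF bounded_linear_vec_nth])

lemma stochastic_vecs_nonempty:
  "vec_lambda (\<lambda>(b, s, s'). if s' = s then 1 else 0) \<in> stochastic_vecs"
  unfolding stochastic_vecs_def by auto

lemma continuous_on_system_map: "continuous_on S (system_map \<sigma> \<rho> p)"
proof -
  have "continuous_on S (\<lambda>v. chain (vec_family v) cs t s')" for cs t s'
  proof (induction cs arbitrary: t)
    case (Cons c cs)
    have "continuous_on S (\<lambda>v. vec_family v c t t')" for t'
      unfolding vec_family_def by (intro continuous_on_component continuous_on_id)
    with Cons show ?case
      unfolding chain.simps by (intro continuous_on_sum continuous_on_mult)
  qed simp
  then show ?thesis
    unfolding system_map_def Qx_def
    by (intro continuous_on_vec_lambda)
      (simp add: case_prod_beta continuous_on_sum continuous_on_mult)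
qed

lemma system_map_stochastic:
  assumes "0 \<le> p" "p \<le> 1" and "v \<in> stochastic_vecs"
  shows "system_map \<sigma> \<rho> p v \<in> stochastic_vecs"
proof -
  have nonneg: "\<And>b s s'. 0 \<le> vec_family v b s s'"
    and stochastic: "\<And>b s. (\<Sum>s'\<in>UNIV. vec_family v b s s') = 1"
    using assms(3) unfolding stochastic_vecs_def vec_family_def by auto
  have row_sum: "(\<Sum>s'\<in>UNIV. system_map \<sigma> \<rho> p v $ (b, s, s')) = 1" for b s
  proof -
    have "(\<Sum>s'\<in>UNIV. system_map \<sigma> \<rho> p v $ (b, s, s'))
        = (\<Sum>s'\<in>UNIV. \<Sum>x\<in>UNIV. bit_prob p x * Qx \<sigma> \<rho> (vec_family v) x b s s')"
      unfolding system_map_def by simp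
    also have "\<dots> = (\<Sum>x\<in>UNIV. \<Sum>s'\<in>UNIV. bit_prob p x * Qx \<sigma> \<rho> (vec_family v) x b s s')"
      by (rule sum.swap)
    also have "\<dots> = (\<Sum>x\<in>UNIV. bit_prob p x * (\<Sum>s'\<in>UNIV. Qx \<sigma> \<rho> (vec_family v) x b s s'))"
      by (simp add: sum_distrib_left)
    also have "\<dots> = 1"
      by (simp add: Qx_def sum_chain_eq_1 stochastic bit_prob_def UNIV_bool)
    finally show ?thesis .
  qed
  moreover have "0 \<le> system_map \<sigma> \<rho> p v $ (b, s, s')" for b s s'
    using assms(1,2) unfolding system_map_def Qx_def bit_prob_def
    by (auto intro!: sum_nonneg mult_nonneg_nonneg chain_nonneg nonneg)
  ultimately show ?thesis
    unfolding stochastic_vecs_def by (simp add: split_paired_All)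
qed

lemma fixed_point_solves_system:
  assumes "v \<in> stochastic_vecs" and "system_map \<sigma> \<rho> p v = v"
  shows "solves_system \<sigma> \<rho> p (vec_family v)"
proof -
  have "vec_family v b s s' = system_map \<sigma> \<rho> p v $ (b, s, s')" for b s s'
    by (simp add: assms(2) vec_family_def)
  then show ?thesis
    using assms(1) unfolding solves_system_def stochastic_vecs_def system_map_def
    by (simp add: vec_family_def)
qed

lemma solves_system_exists:
  fixes \<sigma> :: "'s::finite \<Rightarrow> bool \<Rightarrow> 'b::finite \<Rightarrow> 's"
  assumes "0 \<le> p" "p \<le> 1"
  shows "\<exists>a. solves_system \<sigma> \<rho> p a"
proof -
  obtain v where "v \<in> stochastic_vecs" and "system_map \<sigma> \<rho> p v = v"
    using brouwer[OF compact_stochastic_vecs convex_stochastic_vecs _ continuous_on_system_map]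
      stochastic_vecs_nonempty system_map_stochastic[OF assms] by blast
  then show ?thesis
    using fixed_point_solves_system by blast
qed

theorem claim3p2:
  fixes trans_st :: "'s::finite \<Rightarrow> bool \<Rightarrow> 'b::finite \<Rightarrow> 's"
    and rho :: "'s \<Rightarrow> bool \<Rightarrow> 'b \<Rightarrow> 'b list"
  assumes "pda_standing_assumption trans_st rho"
    and "0 < p" and "p < 1"
  shows "solves_system trans_st rho p (\<lambda>b s s'. alpha_tilde trans_st rho p [b] s s')
       \<and> (\<forall>a. solves_system trans_st rho p a \<longrightarrow> a = (\<lambda>b s s'. alpha_tilde trans_st rho p [b] s s'))"
proof -
  have unique: "\<forall>a. solves_system trans_st rho p a \<longrightarrow> a = (\<lambda>b s s'. alpha_tilde trans_st rho p [b] s s')"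
    using solves_system_imp_eq_alpha_tilde[OF assms] by blast
  obtain a where "solves_system trans_st rho p a"
    using solves_system_exists[of p trans_st rho] assms(2,3) by auto
  with unique show ?thesis
    by auto
qed

end
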